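(* Let $\mathcal{Q}$ be a quadrangle with vertices $A,C,B,D$ in cyclic order, and let $a,b$ be the tangent lines to $\mathcal{C}_{\mathcal{Q}}$ at $A$ and $B$. For $X\in (A\vee B)\setminus\{A,B\}$ let $x=(X\cdot\rho_{A,B})\vee(a\wedge b)$; then $X\notin x$ and $$\mathcal{C}_{\mathcal{Q}}=\{\,C\cdot\rho_{X,x}\;:\;X\in (A\vee B)\setminus\{A,B\}\,\}\cup\{A,B\}.$$
   Context: $\mathbb{P}^2$ denotes the projective plane over a field $F$ with $\operatorname{char}F\neq 2$. For distinct points $X,Y$, $X\vee Y$ is the line through them; for distinct lines $\ell,m$, $\ell\wedge m$ is their common point. Maps act on the right: $X\cdot\rho$. Four distinct collinear points $A,C,B,D$ form a harmonic set with conjugate pairs $\{A,B\}$ and $\{C,D\}$ if the cross-ratio $(A,B;C,D)=-1$; $D$ is then the harmonic conjugate of $C$ with respect to $A,B$. Four distinct concurrent lines form a harmonic pencil with given conjugate pairs if some (equivalently every) line not through their common point meets them in a harmonic set with the corresponding conjugate pairs. For distinct points $A,B$ on a line $\ell$, $\rho_{A,B}:\ell\to\ell$ fixes $A,B$ and sends every other point of $\ell$ to its harmonic conjugate with respect to $A,B$. For a point $P$ and a line $m$ with $P\notin m$, the harmonic reflection $\rho_{P,m}$ of $\mathbb{P}^2$ fixes $P$ and every point of $m$ and sends every other point $X$ to the harmonic conjugate of $X$ with respect to $P$ and $(X\vee P)\wedge m$. A quadrangle $\mathcal{Q}$ with vertices $A,C,B,D$ (in cyclic order) consists of four points in general position (no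 three collinear) together with this cyclic order up to reversal; its sides are $A\vee C, C\vee B, B\vee D, D\vee A$, and its diagonal lines are $A\vee B$ and $C\vee D$. The harmonic curve $\mathcal{C}_{\mathcal{Q}}$ is the set consisting of $A,C,B,D$ together with all points $Z\notin\{A,B,C,D\}$ such that $Z\vee A, Z\vee C, Z\vee B, Z\vee D$ are four distinct lines forming a harmonic pencil with conjugate pairs $\{Z\vee A,Z\vee B\}$ and $\{Z\vee C,Z\vee D\}$. The tangent line at a vertex $V$ of $\mathcal{Q}$ is the harmonic conjugate, within the pencil of lines through $V$, of the diagonal line through $V$ with respect to the two sides through $V$. *)

theory Defs
  imports Main
begin

type_synonym 'a vec3 = "'a \<times> 'a \<times> 'a"

definition vzero :: "'a::field vec3" where "vzero = (0, 0, 0)"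

definition vscale :: "'a::field \<Rightarrow> 'a vec3 \<Rightarrow> 'a vec3" where
  "vscale c v = (case v of (x, y, z) \<Rightarrow> (c * x, c * y, c * z))"

definition vadd :: "'a::field vec3 \<Rightarrow> 'a vec3 \<Rightarrow> 'a vec3" where
  "vadd v w = (case v of (x, y, z) \<Rightarrow> case w of (x', y', z') \<Rightarrow> (x + x', y + y', z + z'))"

definition vdot :: "'a::field vec3 \<Rightarrow> 'a vec3 \<Rightarrow> 'a" where
  "vdot v w = (case v of (x, y, z) \<Rightarrow> case w of (x', y', z') \<Rightarrow> x * x' + y * y' + z * z')"

text \<open>A point of P^2(F) is a one-dimensional subspace of F^3 with zero removed,
  i.e. the set of all nonzero multiples of a nonzero vector.
  Lines are represented likewise by their (dual) homogeneous coordinates.\<close>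

typedef (overloaded) 'a ppoint =
  "{S :: ('a::field) vec3 set. \<exists>v. v \<noteq> vzero \<and> S = {vscale c v | c. c \<noteq> 0}}"
  by (rule exI[of _ "{vscale c (1, 0, 0) | c. c \<noteq> 0}"], rule CollectI, rule exI[of _ "(1, 0, 0)"]) (simp add: vzero_def)

typedef (overloaded) 'a pline =
  "{S :: ('a::field) vec3 set. \<exists>v. v \<noteq> vzero \<and> S = {vscale c v | c. c \<noteq> 0}}"
  by (rule exI[of _ "{vscale c (1, 0, 0) | c. c \<noteq> 0}"], rule CollectI, rule exI[of _ "(1, 0, 0)"]) (simp add: vzero_def)

definition incid :: "'a::field ppoint \<Rightarrow> 'a pline \<Rightarrow> bool" where
  "incid P l \<longleftrightarrow> (\<exists>v w. v \<in> Rep_ppoint P \<and> w \<in> Rep_pline l \<and> vdot v w = 0)"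

definition join :: "'a::field ppoint \<Rightarrow> 'a ppoint \<Rightarrow> 'a pline" where
  "join P Q = (THE l. incid P l \<and> incid Q l)"

definition meet :: "'a::field pline \<Rightarrow> 'a pline \<Rightarrow> 'a ppoint" where
  "meet l m = (THE P. incid P l \<and> incid P m)"

definition collinear4 :: "'a::field ppoint \<Rightarrow> 'a ppoint \<Rightarrow> 'a ppoint \<Rightarrow> 'a ppoint \<Rightarrow> bool" where
  "collinear4 A B C D \<longleftrightarrow> (\<exists>l. incid A l \<and> incid B l \<and> incid C l \<and> incid D l)"

definition concurrent4 :: "'a::field pline \<Rightarrow> 'a pline \<Rightarrow> 'a pline \<Rightarrow> 'a pline \<Rightarrow> bool" where
  "concurrent4 a b c d \<longleftrightarrow> (\<exists>P. incid P a \<and> incid P b \<and> incid P c \<and> incid P d)"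

text \<open>Cross-ratio (A,B;C,D) of four distinct collinear points: choosing representatives
  a, b of A, B, write C = [a + l b], D = [a + m b]; then (A,B;C,D) = l / m.
  (In the affine parameter t of [a + t b] this is the classical
  ((C-A)(D-B))/((C-B)(D-A)) with A at 0 and B at infinity.)\<close>
definition cross_ratio :: "'a::field ppoint \<Rightarrow> 'a ppoint \<Rightarrow> 'a ppoint \<Rightarrow> 'a ppoint \<Rightarrow> 'a" where
  "cross_ratio A B C D = (THE r. \<exists>a b l m. a \<in> Rep_ppoint A \<and> b \<in> Rep_ppoint B \<and>
       vadd a (vscale l b) \<in> Rep_ppoint C \<and> vadd a (vscale m b) \<in> Rep_ppoint D \<and>
       m \<noteq> 0 \<and> r = l / m)"

text \<open>Harmonic set A, C, B, D with conjugate pairs {A,B} and {C,D}.\<close>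
definition harmonic_set :: "'a::field ppoint \<Rightarrow> 'a ppoint \<Rightarrow> 'a ppoint \<Rightarrow> 'a ppoint \<Rightarrow> bool" where
  "harmonic_set A C B D \<longleftrightarrow> distinct [A, C, B, D] \<and> collinear4 A C B D \<and> cross_ratio A B C D = -1"

definition harm_conj :: "'a::field ppoint \<Rightarrow> 'a ppoint \<Rightarrow> 'a ppoint \<Rightarrow> 'a ppoint" where
  "harm_conj A B C = (THE D. harmonic_set A C B D)"

definition harmonic_pencil :: "'a::field pline \<Rightarrow> 'a pline \<Rightarrow> 'a pline \<Rightarrow> 'a pline \<Rightarrow> bool" where
  "harmonic_pencil l1 l3 l2 l4 \<longleftrightarrow> distinct [l1, l3, l2, l4] \<and> concurrent4 l1 l3 l2 l4 \<and>
     (\<exists>t. \<not> incid (meet l1 l2) t \<and>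
          harmonic_set (meet t l1) (meet t l3) (meet t l2) (meet t l4))"

definition harm_conj_line :: "'a::field pline \<Rightarrow> 'a pline \<Rightarrow> 'a pline \<Rightarrow> 'a pline" where
  "harm_conj_line l1 l2 l3 = (THE l4. harmonic_pencil l1 l3 l2 l4)"

text \<open>rho_{A,B} on the line A \<or> B (maps act on the right: X . rho).\<close>
definition rho_line :: "'a::field ppoint \<Rightarrow> 'a ppoint \<Rightarrow> 'a ppoint \<Rightarrow> 'a ppoint" where
  "rho_line A B X = (if X = A \<or> X = B then X else harm_conj A B X)"

definition rho_refl :: "'a::field ppoint \<Rightarrow> 'a pline \<Rightarrow> 'a ppoint \<Rightarrow> 'a ppoint" where
  "rho_refl P m X = (if X = P \<or> incid X m then X else harm_conj P (meet (join X P) m) X)"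

definition general_position :: "'a::field ppoint \<Rightarrow> 'a ppoint \<Rightarrow> 'a ppoint \<Rightarrow> 'a ppoint \<Rightarrow> bool" where
  "general_position A C B D \<longleftrightarrow> distinct [A, C, B, D] \<and>
     (\<forall>P\<in>{A, C, B, D}. \<forall>Q\<in>{A, C, B, D}. \<forall>R\<in>{A, C, B, D}.
        distinct [P, Q, R] \<longrightarrow> \<not> (\<exists>l. incid P l \<and> incid Q l \<and> incid R l))"

definition harmonic_curve :: "'a::field ppoint \<Rightarrow> 'a ppoint \<Rightarrow> 'a ppoint \<Rightarrow> 'a ppoint \<Rightarrow> 'a ppoint set" where
  "harmonic_curve A C B D = {A, C, B, D} \<union>
     {Z. Z \<notin> {A, B, C, D} \<and> distinct [join Z A, join Z C, join Z B, join Z D] \<and>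
         harmonic_pencil (join Z A) (join Z C) (join Z B) (join Z D)}"

definition tangent_at :: "'a::field ppoint \<Rightarrow> 'a ppoint \<Rightarrow> 'a ppoint \<Rightarrow> 'a ppoint \<Rightarrow> 'a pline" where
  "tangent_at A C B D = harm_conj_line (join A C) (join D A) (join A B)"

end

theory Submission
  imports Defs
begin

text \<open>
  Since no three vertices are collinear, there are homogeneous coordinates in which
  A, B, C, D are (1:0:0), (0:1:0), (0:0:1), (1:1:1). Everything then reduces to one computation:
  for independent p, q the harmonic conjugate of [a p + b q] with respect to [p], [q] is
  [a p - b q], and dually for lines through a point. The lines joining Z = (z1:z2:z3) to the
  vertices lie in the pencil spanned by Z\<or>A and Z\<or>B, with coordinates (1,0), (0,1), (z1,z2)
  and (z3-z1, z3-z2), so the harmonic curve is the conic 2 z1 z2 = z3 (z1 + z2).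
  The tangents at A and B are (0:-2:1) and (2:0:-1), meeting in (1:1:2). For X = (x:y:0) the
  reflection \<rho>_{X,x} has X\<rho>_{A,B} = (x:-y:0), axis x = (-2y:-2x:x+y), and sends C to
  (x(x+y) : y(x+y) : 2xy); every point of the conic other than A and B arises this way.
\<close>

section \<open>Vector algebra in F^3\<close>

definition vcross :: "'a::field vec3 \<Rightarrow> 'a vec3 \<Rightarrow> 'a vec3" where
  "vcross v w = (case v of (x, y, z) \<Rightarrow> case w of (x', y', z') \<Rightarrow>
      (y * z' - z * y', z * x' - x * z', x * y' - y * x'))"

definition vcomb :: "'a::field \<Rightarrow> 'a vec3 \<Rightarrow> 'a \<Rightarrow> 'a vec3 \<Rightarrow> 'a vec3" where
  "vcomb s v t w = vadd (vscale s v) (vscale t w)"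

definition vframe :: "'a::field vec3 \<Rightarrow> 'a vec3 \<Rightarrow> 'a vec3 \<Rightarrow> 'a vec3 \<Rightarrow> 'a vec3" where
  "vframe a b c u = (case u of (x, y, z) \<Rightarrow> vadd (vadd (vscale x a) (vscale y b)) (vscale z c))"

abbreviation vdet :: "'a::field vec3 \<Rightarrow> 'a vec3 \<Rightarrow> 'a vec3 \<Rightarrow> 'a" where
  "vdet a b c \<equiv> vdot a (vcross b c)"

lemma vec3_simps:
  "vzero = (0, 0, 0)"
  "vadd (a1, a2, a3) (b1, b2, b3) = (a1 + b1, a2 + b2, a3 + b3)"
  "vscale k (a1, a2, a3) = (k * a1, k * a2, k * a3)"
  "vdot (a1, a2, a3) (b1, b2, b3) = a1 * b1 + a2 * b2 + a3 * b3"
  "vcross (a1, a2, a3) (b1, b2, b3) = (a2 * b3 - a3 * b2, a3 * b1 - a1 * b3, a1 * b2 - a2 * b1)"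
  "vcomb s (a1, a2, a3) t (b1, b2, b3) = (s * a1 + t * b1, s * a2 + t * b2, s * a3 + t * b3)"
  "vframe (a1, a2, a3) (b1, b2, b3) (c1, c2, c3) (x, y, z) =
     (x * a1 + y * b1 + z * c1, x * a2 + y * b2 + z * c2, x * a3 + y * b3 + z * c3)"
  by (simp_all add: vzero_def vadd_def vscale_def vdot_def vcross_def vcomb_def vframe_def)

lemma vdot_commute: "vdot v w = vdot w v"
  by (cases v, cases w) (simp add: vec3_simps algebra_simps)

lemma vdet_rotate: "vdet b c a = vdet a b c" "vdet c a b = vdet a b c"
  by (cases a, cases b, cases c, simp add: vec3_simps algebra_simps)+

lemma vdot_vcross_self [simp]:
  "vdot v (vcross v w) = 0" "vdot w (vcross v w) = 0"
  "vdot (vcross v w) v = 0" "vdot (vcross v w) w = 0"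
  by (cases v, cases w, simp add: vec3_simps algebra_simps)+

lemma vdot_vzero [simp]: "vdot vzero v = 0" "vdot v vzero = 0"
  by (cases v, simp add: vec3_simps)+

lemma vcross_vzero [simp]: "vcross vzero v = vzero" "vcross v vzero = vzero"
  by (cases v, simp add: vec3_simps)+

lemma vscale_one [simp]: "vscale 1 v = v"
  by (cases v) (simp add: vec3_simps)

lemma vscale_vscale: "vscale c (vscale d v) = vscale (c * d) v"
  by (cases v) (simp add: vec3_simps mult.assoc)

lemma vscale_eq_vzero_iff: "vscale c v = vzero \<longleftrightarrow> c = 0 \<or> v = vzero"
  by (cases v) (auto simp: vec3_simps)

lemma vcross_vscale_left: "vcross (vscale c v) w = vscale c (vcross v w)"
  by (cases v, cases w) (simp add: vec3_simps algebra_simps)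

lemma vcross_self [simp]: "vcross v v = vzero"
  by (cases v) (simp add: vec3_simps algebra_simps)

lemma vcomb_1_0 [simp]: "vcomb 1 p 0 q = p"
  and vcomb_0_1 [simp]: "vcomb 0 p 1 q = q"
  and vcomb_0_0 [simp]: "vcomb 0 p 0 q = vzero"
  by (cases p, cases q, simp add: vec3_simps)+

lemma vcross_vcomb_vcomb: "vcross (vcomb a p b q) (vcomb c p d q) = vscale (a * d - b * c) (vcross p q)"
  by (cases p, cases q) (simp add: vec3_simps algebra_simps)

lemma vcross_vcomb_right: "vcross t (vcomb a l b m) = vcomb a (vcross t l) b (vcross t m)"
  by (cases t, cases l, cases m) (simp add: vec3_simps algebra_simps)

lemma vdot_vcomb_left: "vdot (vcomb a p b q) w = a * vdot p w + b * vdot q w"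
  by (cases p, cases q, cases w) (simp add: vec3_simps algebra_simps)

lemma vcross_vcross: "vcross u (vcross v w) = vcomb (vdot u w) v (- vdot u v) w"
  by (cases u, cases v, cases w) (simp add: vec3_simps algebra_simps)

lemma vcross_vcross_vcross: "vcross (vcross t l) (vcross t m) = vscale (vdet t l m) t"
  by (cases t, cases l, cases m) (simp add: vec3_simps algebra_simps)

lemma vframe_cramer:
  "vframe a b c (vdet v b c, vdet v c a, vdet v a b) = vscale (vdet a b c) v"
  by (cases a, cases b, cases c, cases v) (simp add: vec3_simps algebra_simps)

lemma ex_vdot_nonzero:
  assumes "v \<noteq> vzero" shows "\<exists>t. vdot t v \<noteq> 0"
proof -
  obtain v1 v2 v3 where v: "v = (v1, v2, v3)" by (cases v)
  then consider "v1 \<noteq> 0" | "v2 \<noteq> 0" | "v3 \<noteq> 0" using assms by (auto simp: vec3_simps)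
  then show ?thesis
  proof cases
    case 1 then show ?thesis by (intro exI[of _ "(1, 0, 0)"]) (simp add: v vec3_simps)
  next
    case 2 then show ?thesis by (intro exI[of _ "(0, 1, 0)"]) (simp add: v vec3_simps)
  next
    case 3 then show ?thesis by (intro exI[of _ "(0, 0, 1)"]) (simp add: v vec3_simps)
  qed
qed

lemma vcross_eq_vzero_imp_vscale:
  assumes v: "v \<noteq> vzero" and vw: "vcross v w = vzero"
  shows "\<exists>k. w = vscale k v"
proof -
  obtain t where t: "vdot t v \<noteq> 0" using ex_vdot_nonzero[OF v] by blast
  have "vcomb (vdot t w) v (- vdot t v) w = vzero"
    using vcross_vcross[of t v w] vw by simp
  then have "w = vscale (vdot t w / vdot t v) v"
    using t by (cases v, cases w) (auto simp: vec3_simps field_simps)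
  then show ?thesis ..
qed

lemma vscale_eq_vscale_iff: "v \<noteq> vzero \<Longrightarrow> vscale c v = vscale d v \<longleftrightarrow> c = d"
  by (cases v) (auto simp: vec3_simps)

lemma vcomb_eq_vcomb_iff:
  assumes pq: "vcross p q \<noteq> vzero"
  shows "vcomb a p b q = vcomb c p d q \<longleftrightarrow> a = c \<and> b = d"
proof
  assume e: "vcomb a p b q = vcomb c p d q"
  then have "vcross (vcomb 1 p 0 q) (vcomb a p b q) = vcross (vcomb 1 p 0 q) (vcomb c p d q)"
    and "vcross (vcomb 0 p 1 q) (vcomb a p b q) = vcross (vcomb 0 p 1 q) (vcomb c p d q)"
    by simp_all
  then show "a = c \<and> b = d"
    by (simp only: vcross_vcomb_vcomb) (simp add: vscale_eq_vscale_iff pq)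
qed simp

lemma vcomb_eq_vzero_iff: "vcross p q \<noteq> vzero \<Longrightarrow> vcomb s p t q = vzero \<longleftrightarrow> s = 0 \<and> t = 0"
  using vcomb_eq_vcomb_iff[of p q s t 0 0] by simp

lemma ex_vcomb_if_vdet_eq_0:
  assumes c: "vdet c p q = 0" and pq: "vcross p q \<noteq> vzero"
  shows "\<exists>s t. c = vcomb s p t q"
proof -
  obtain r where r: "vdet r p q \<noteq> 0" using ex_vdot_nonzero[OF pq] by blast
  then have d: "vdet p q r \<noteq> 0" using vdet_rotate by metis
  have "vscale (vdet p q r) c = vcomb (vdet c q r) p (vdet c r p) q"
    using vframe_cramer[of p q r c] c by (cases p, cases q, cases r) (simp add: vec3_simps)
  then have "c = vcomb (vdet c q r / vdet p q r) p (vdet c r p / vdet p q r) q"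
    using d by (cases c, cases p, cases q) (auto simp: vec3_simps field_simps)
  then show ?thesis by blast
qed

definition ray :: "'a::field vec3 \<Rightarrow> 'a vec3 set" where
  "ray v = {vscale c v | c. c \<noteq> 0}"

definition point_of :: "'a::field vec3 \<Rightarrow> 'a ppoint" where
  "point_of v = Abs_ppoint (ray v)"

definition line_of :: "'a::field vec3 \<Rightarrow> 'a pline" where
  "line_of v = Abs_pline (ray v)"

lemma vscale_mem_ray: "c \<noteq> 0 \<Longrightarrow> vscale c v \<in> ray v"
  unfolding ray_def by blast

lemma self_mem_ray: "v \<in> ray v"
  using vscale_mem_ray[of 1 v] by simp

lemma ray_vscale:
  assumes k: "k \<noteq> 0" shows "ray (vscale k v) = ray v"
proof (intro set_eqI iffI)
  fix x assume "x \<in> ray (vscale k v)"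
  then obtain c where "c \<noteq> 0" "x = vscale (c * k) v" by (auto simp: ray_def vscale_vscale)
  then show "x \<in> ray v" using k vscale_mem_ray[of "c * k" v] by simp
next
  fix x assume "x \<in> ray v"
  then obtain c where "c \<noteq> 0" "x = vscale (c / k) (vscale k v)"
    using k by (auto simp: ray_def vscale_vscale)
  then show "x \<in> ray (vscale k v)" using vscale_mem_ray[of "c / k" "vscale k v"] k by simp
qed

lemma ray_eq_iff:
  assumes v: "v \<noteq> vzero" and w: "w \<noteq> vzero"
  shows "ray v = ray w \<longleftrightarrow> vcross v w = vzero"
proof
  assume "ray v = ray w"
  then obtain c where "w = vscale c v" using self_mem_ray[of w] unfolding ray_def by blast
  then show "vcross v w = vzero" by (cases v) (simp add: vec3_simps algebra_simps)
next
  assume "vcross v w = vzero"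
  then obtain k where k: "w = vscale k v" using vcross_eq_vzero_imp_vscale[OF v] by blast
  then have "k \<noteq> 0" using w by (auto simp: vscale_eq_vzero_iff)
  then show "ray v = ray w" using k ray_vscale by metis
qed

lemma ray_mem_projective_classes:
  "v \<noteq> vzero \<Longrightarrow> ray v \<in> {S. \<exists>v. v \<noteq> vzero \<and> S = {vscale c v | c. c \<noteq> 0}}"
  unfolding ray_def by blast

lemma Rep_point_of: "v \<noteq> vzero \<Longrightarrow> Rep_ppoint (point_of v) = ray v"
  unfolding point_of_def by (rule Abs_ppoint_inverse[OF ray_mem_projective_classes])

lemma Rep_line_of: "v \<noteq> vzero \<Longrightarrow> Rep_pline (line_of v) = ray v"
  unfolding line_of_def by (rule Abs_pline_inverse[OF ray_mem_projective_classes])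

lemma ex_point_of: "\<exists>v. v \<noteq> vzero \<and> P = point_of v"
  using Rep_ppoint[of P] Rep_ppoint_inverse[of P] unfolding point_of_def ray_def by force

lemma ex_line_of: "\<exists>v. v \<noteq> vzero \<and> l = line_of v"
  using Rep_pline[of l] Rep_pline_inverse[of l] unfolding line_of_def ray_def by force

lemma point_of_eq_iff:
  assumes "v \<noteq> vzero" "w \<noteq> vzero"
  shows "point_of v = point_of w \<longleftrightarrow> vcross v w = vzero"
  unfolding point_of_def Abs_ppoint_inject[OF assms[THEN ray_mem_projective_classes]]
  using ray_eq_iff[OF assms] .

lemma line_of_eq_iff:
  assumes "v \<noteq> vzero" "w \<noteq> vzero"
  shows "line_of v = line_of w \<longleftrightarrow> vcross v w = vzero"
  unfolding line_of_def Abs_pline_inject[OF assms[THEN ray_mem_projective_classes]]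
  using ray_eq_iff[OF assms] .

lemma point_of_vscale: "c \<noteq> 0 \<Longrightarrow> v \<noteq> vzero \<Longrightarrow> point_of (vscale c v) = point_of v"
  by (simp add: point_of_eq_iff vscale_eq_vzero_iff vcross_vscale_left)

lemma incid_point_of_line_of:
  assumes v: "v \<noteq> vzero" and w: "w \<noteq> vzero"
  shows "incid (point_of v) (line_of w) \<longleftrightarrow> vdot v w = 0"
proof -
  have scaled: "vdot (vscale c v) (vscale d w) = c * d * vdot v w" for c d
    by (cases v, cases w) (simp add: vec3_simps algebra_simps)
  show ?thesis
  proof
    assume "incid (point_of v) (line_of w)"
    then obtain c d where "c \<noteq> 0" "d \<noteq> 0" "vdot (vscale c v) (vscale d w) = 0"
      unfolding incid_def Rep_point_of[OF v] Rep_line_of[OF w] ray_def by blast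
    with scaled show "vdot v w = 0" by simp
  next
    assume "vdot v w = 0"
    then show "incid (point_of v) (line_of w)"
      unfolding incid_def Rep_point_of[OF v] Rep_line_of[OF w] using self_mem_ray by blast
  qed
qed

lemma line_of_eq_if_incid:
  assumes "incid (point_of v) l" "incid (point_of w) l" and vw: "vcross v w \<noteq> vzero"
  shows "l = line_of (vcross v w)"
proof -
  have v: "v \<noteq> vzero" and w: "w \<noteq> vzero" using vw by auto
  obtain m where m: "m \<noteq> vzero" "l = line_of m" using ex_line_of by blast
  have "vdot m v = 0" "vdot m w = 0"
    using assms m incid_point_of_line_of[OF v m(1)] incid_point_of_line_of[OF w m(1)]
    by (simp_all add: vdot_commute)
  then have "vcross m (vcross v w) = vzero" by (simp add: vcross_vcross)
  then show ?thesis using m line_of_eq_iff[OF m(1) vw] by simp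
qed

lemma point_of_eq_if_incid:
  assumes "incid P (line_of v)" "incid P (line_of w)" and vw: "vcross v w \<noteq> vzero"
  shows "P = point_of (vcross v w)"
proof -
  have v: "v \<noteq> vzero" and w: "w \<noteq> vzero" using vw by auto
  obtain m where m: "m \<noteq> vzero" "P = point_of m" using ex_point_of by blast
  have "vdot m v = 0" "vdot m w = 0"
    using assms m incid_point_of_line_of[OF m(1) v] incid_point_of_line_of[OF m(1) w] by simp_all
  then have "vcross m (vcross v w) = vzero" by (simp add: vcross_vcross)
  then show ?thesis using m point_of_eq_iff[OF m(1) vw] by simp
qed

lemma join_point_of:
  assumes vw: "vcross v w \<noteq> vzero"
  shows "join (point_of v) (point_of w) = line_of (vcross v w)"
proof -
  have "v \<noteq> vzero" "w \<noteq> vzero" using vw by auto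
  then show ?thesis
    unfolding join_def
    using incid_point_of_line_of[OF _ vw] line_of_eq_if_incid[OF _ _ vw]
    by (intro the_equality) auto
qed

lemma meet_line_of:
  assumes vw: "vcross v w \<noteq> vzero"
  shows "meet (line_of v) (line_of w) = point_of (vcross v w)"
proof -
  have "v \<noteq> vzero" "w \<noteq> vzero" using vw by auto
  then show ?thesis
    unfolding meet_def
    using incid_point_of_line_of[OF vw] point_of_eq_if_incid[OF _ _ vw]
    by (intro the_equality) auto
qed

lemma vdet_neq_0_if_not_collinear:
  assumes u: "u \<noteq> vzero" and v: "v \<noteq> vzero" and w: "w \<noteq> vzero" and "point_of u \<noteq> point_of v"
    and not_collinear: "\<not> (\<exists>l. incid (point_of u) l \<and> incid (point_of v) l \<and> incid (point_of w) l)"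
  shows "vdet u v w \<noteq> 0"
proof
  have uv: "vcross u v \<noteq> vzero" using assms point_of_eq_iff[OF u v] by simp
  assume "vdet u v w = 0"
  then have "vdot w (vcross u v) = 0" using vdet_rotate(2)[where a = u and b = v and c = w] by simp
  then have "incid (point_of u) (line_of (vcross u v)) \<and> incid (point_of v) (line_of (vcross u v))
      \<and> incid (point_of w) (line_of (vcross u v))"
    using u v w by (simp add: incid_point_of_line_of[OF _ uv])
  with not_collinear show False by blast
qed

section \<open>Harmonic sets and harmonic pencils in coordinates\<close>

lemma point_of_vcomb_eq_iff:
  assumes pq: "vcross p q \<noteq> vzero" and "a \<noteq> 0 \<or> b \<noteq> 0" and "c \<noteq> 0 \<or> d \<noteq> 0"
  shows "point_of (vcomb a p b q) = point_of (vcomb c p d q) \<longleftrightarrow> a * d - b * c = 0"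
  using assms by (simp add: point_of_eq_iff vcomb_eq_vzero_iff vcross_vcomb_vcomb vscale_eq_vzero_iff)

lemma line_of_vcomb_eq_iff:
  assumes lm: "vcross l m \<noteq> vzero" and "a \<noteq> 0 \<or> b \<noteq> 0" and "c \<noteq> 0 \<or> d \<noteq> 0"
  shows "line_of (vcomb a l b m) = line_of (vcomb c l d m) \<longleftrightarrow> a * d - b * c = 0"
  using assms by (simp add: line_of_eq_iff vcomb_eq_vzero_iff vcross_vcomb_vcomb vscale_eq_vzero_iff)

lemma point_of_vcomb_normalize:
  assumes "vcross p q \<noteq> vzero" and "a \<noteq> 0"
  shows "point_of (vcomb a p b q) = point_of (vcomb 1 p (b / a) q)"
  using assms by (simp add: point_of_vcomb_eq_iff)

lemma incid_point_of_vcomb: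
  assumes "vcross p q \<noteq> vzero" and "a \<noteq> 0 \<or> b \<noteq> 0"
  shows "incid (point_of (vcomb a p b q)) (line_of (vcross p q))"
  using assms by (simp add: incid_point_of_line_of vcomb_eq_vzero_iff vdot_vcomb_left)

lemma incid_line_of_vcomb:
  assumes "vcross l m \<noteq> vzero" and "a \<noteq> 0 \<or> b \<noteq> 0"
  shows "incid (point_of (vcross l m)) (line_of (vcomb a l b m))"
  using assms
  by (simp add: incid_point_of_line_of vcomb_eq_vzero_iff vdot_commute[of "vcross l m"] vdot_vcomb_left)

lemma cross_ratio_point_of_vcomb:
  assumes pq: "vcross p q \<noteq> vzero" and m: "m \<noteq> 0"
  shows "cross_ratio (point_of p) (point_of q) (point_of (vcomb 1 p l q)) (point_of (vcomb 1 p m q))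
    = l / m"
  unfolding cross_ratio_def
proof (rule the_equality)
  have "p \<noteq> vzero" "q \<noteq> vzero" "vcomb 1 p l q \<noteq> vzero" "vcomb 1 p m q \<noteq> vzero"
    using pq by (auto simp: vcomb_eq_vzero_iff)
  moreover have "vadd p (vscale c q) = vcomb 1 p c q" for c by (simp add: vcomb_def)
  ultimately show "\<exists>a b l' m'. a \<in> Rep_ppoint (point_of p) \<and> b \<in> Rep_ppoint (point_of q) \<and>
      vadd a (vscale l' b) \<in> Rep_ppoint (point_of (vcomb 1 p l q)) \<and>
      vadd a (vscale m' b) \<in> Rep_ppoint (point_of (vcomb 1 p m q)) \<and> m' \<noteq> 0 \<and> l / m = l' / m'"
    using m by (intro exI[of _ p] exI[of _ q] exI[of _ l] exI[of _ m]) (simp add: Rep_point_of self_mem_ray)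
next
  have coeffs: "c1 = k \<and> l' * c2 = k * t"
    if "vadd (vscale c1 p) (vscale l' (vscale c2 q)) = vscale k (vcomb 1 p t q)" for c1 c2 l' k t
  proof -
    have "vcomb c1 p (l' * c2) q = vcomb k p (k * t) q"
      using that by (cases p, cases q) (simp add: vec3_simps algebra_simps)
    then show ?thesis using vcomb_eq_vcomb_iff[OF pq] by simp
  qed
  fix r
  assume "\<exists>a b l' m'. a \<in> Rep_ppoint (point_of p) \<and> b \<in> Rep_ppoint (point_of q) \<and>
      vadd a (vscale l' b) \<in> Rep_ppoint (point_of (vcomb 1 p l q)) \<and>
      vadd a (vscale m' b) \<in> Rep_ppoint (point_of (vcomb 1 p m q)) \<and> m' \<noteq> 0 \<and> r = l' / m'"
  moreover have "p \<noteq> vzero" "q \<noteq> vzero" "vcomb 1 p l q \<noteq> vzero" "vcomb 1 p m q \<noteq> vzero"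
    using pq by (auto simp: vcomb_eq_vzero_iff)
  ultimately obtain c1 c2 l' m' k k'
    where c1: "c1 \<noteq> 0" and c2: "c2 \<noteq> 0" and m': "m' \<noteq> 0" and r: "r = l' / m'"
    and "vadd (vscale c1 p) (vscale l' (vscale c2 q)) = vscale k (vcomb 1 p l q)"
    and "vadd (vscale c1 p) (vscale m' (vscale c2 q)) = vscale k' (vcomb 1 p m q)"
    by (auto simp: Rep_point_of ray_def)
  then have "l' * c2 = c1 * l" "m' * c2 = c1 * m" using coeffs by metis+
  then have "r = (c1 * l) / (c1 * m)" using r c2 by (metis mult_divide_mult_cancel_right)
  then show "r = l / m" using c1 by simp
qed

lemma harmonic_set_point_of_vcomb_iff:
  assumes two: "(2::'a::field) \<noteq> 0" and pq: "vcross p q \<noteq> (vzero :: 'a vec3)"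
    and a: "a \<noteq> 0" and b: "b \<noteq> 0" and gk: "g \<noteq> 0 \<or> k \<noteq> 0"
  shows "harmonic_set (point_of p) (point_of (vcomb a p b q)) (point_of q) (point_of (vcomb g p k q))
    \<longleftrightarrow> a * k + b * g = 0"
proof -
  let ?P = "\<lambda>s t. point_of (vcomb s p t q)"
  have pq_P: "point_of p = ?P 1 0" "point_of q = ?P 0 1" by simp_all
  note P_eq = point_of_vcomb_eq_iff[OF pq]
  have col: "collinear4 (?P 1 0) (?P a b) (?P 0 1) (?P g k)"
    unfolding collinear4_def using a gk incid_point_of_vcomb[OF pq] by (intro exI[of _ "line_of (vcross p q)"]) (simp del: vcomb_1_0 vcomb_0_1)
  have cr: "cross_ratio (?P 1 0) (?P 0 1) (?P a b) (?P g k) = b * g / (a * k)" if "g \<noteq> 0" "k \<noteq> 0"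
  proof -
    have "cross_ratio (?P 1 0) (?P 0 1) (?P a b) (?P g k) = (b / a) / (k / g)"
      using cross_ratio_point_of_vcomb[OF pq, of "k / g" "b / a"] that
      by (simp add: point_of_vcomb_normalize[OF pq a] point_of_vcomb_normalize[OF pq that(1)])
    also have "\<dots> = b * g / (a * k)" by simp
    finally show ?thesis .
  qed
  show ?thesis
    unfolding pq_P
  proof
    assume h: "harmonic_set (?P 1 0) (?P a b) (?P 0 1) (?P g k)"
    then have "?P 1 0 \<noteq> ?P g k" "?P 0 1 \<noteq> ?P g k" by (simp_all add: harmonic_set_def)
    then have g: "g \<noteq> 0" and k: "k \<noteq> 0" using P_eq[of 1 0 g k] P_eq[of 0 1 g k] gk by auto
    then have "b * g / (a * k) = -1" using h cr by (simp add: harmonic_set_def)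
    then show "a * k + b * g = 0" using a k by (simp add: field_simps)
  next
    assume e: "a * k + b * g = 0"
    then have g: "g \<noteq> 0" and k: "k \<noteq> 0" using a b gk by auto
    have "a * k - b * g = - (2 * (b * g))" using e by algebra
    also have "\<dots> \<noteq> 0" using two b g by simp
    finally have "a * k - b * g \<noteq> 0" .
    then have "distinct [?P 1 0, ?P a b, ?P 0 1, ?P g k]"
      using a b g k P_eq[of 1 0 a b] P_eq[of 1 0 0 1] P_eq[of 1 0 g k] P_eq[of a b 0 1]
        P_eq[of a b g k] P_eq[of 0 1 g k]
      by (simp del: vcomb_1_0 vcomb_0_1)
    moreover have "b * g / (a * k) = -1"
      using e a k by (simp add: field_simps eq_neg_iff_add_eq_0 add.commute)
    ultimately show "harmonic_set (?P 1 0) (?P a b) (?P 0 1) (?P g k)"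
      using col cr g k by (simp add: harmonic_set_def del: vcomb_1_0 vcomb_0_1)
  qed
qed

lemma ex_vcomb_point_on_line:
  assumes "incid D (line_of (vcross p q))" and pq: "vcross p q \<noteq> vzero"
  shows "\<exists>g k. (g \<noteq> 0 \<or> k \<noteq> 0) \<and> D = point_of (vcomb g p k q)"
proof -
  obtain d where d: "d \<noteq> vzero" "D = point_of d" using ex_point_of by blast
  then have "vdet d p q = 0" using assms incid_point_of_line_of[OF d(1) pq] by simp
  then obtain g k where "d = vcomb g p k q" using ex_vcomb_if_vdet_eq_0[OF _ pq] by blast
  then show ?thesis using d vcomb_eq_vzero_iff[OF pq, of g k] by auto
qed

lemma ex_vcomb_line_through_point:
  assumes "incid (point_of (vcross l m)) L" and lm: "vcross l m \<noteq> vzero"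
  shows "\<exists>g k. (g \<noteq> 0 \<or> k \<noteq> 0) \<and> L = line_of (vcomb g l k m)"
proof -
  obtain v where v: "v \<noteq> vzero" "L = line_of v" using ex_line_of by blast
  then have "vdet v l m = 0" using assms incid_point_of_line_of[OF lm v(1)] by (simp add: vdot_commute)
  then obtain g k where "v = vcomb g l k m" using ex_vcomb_if_vdet_eq_0[OF _ lm] by blast
  then show ?thesis using v vcomb_eq_vzero_iff[OF lm, of g k] by auto
qed

lemma harm_conj_point_of_vcomb:
  assumes two: "(2::'a::field) \<noteq> 0" and pq: "vcross p q \<noteq> (vzero :: 'a vec3)"
    and a: "a \<noteq> 0" and b: "b \<noteq> 0"
  shows "harm_conj (point_of p) (point_of q) (point_of (vcomb a p b q)) = point_of (vcomb a p (- b) q)"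
  unfolding harm_conj_def
proof (rule the_equality)
  show "harmonic_set (point_of p) (point_of (vcomb a p b q)) (point_of q) (point_of (vcomb a p (- b) q))"
    using harmonic_set_point_of_vcomb_iff[OF two pq a b] a by simp
next
  fix D assume h: "harmonic_set (point_of p) (point_of (vcomb a p b q)) (point_of q) D"
  then obtain l where "incid (point_of p) l" "incid (point_of q) l" "incid D l"
    unfolding harmonic_set_def collinear4_def by blast
  then have "incid D (line_of (vcross p q))" using line_of_eq_if_incid[OF _ _ pq] by blast
  then obtain g k where gk: "g \<noteq> 0 \<or> k \<noteq> 0" and D: "D = point_of (vcomb g p k q)"
    using ex_vcomb_point_on_line[OF _ pq] by blast
  then have "a * k + b * g = 0" using h harmonic_set_point_of_vcomb_iff[OF two pq a b gk] by simp
  then have "g * - b - k * a = 0" by algebra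
  then show "D = point_of (vcomb a p (- b) q)" using D gk a by (simp add: point_of_vcomb_eq_iff[OF pq])
qed

lemma meet_transversal_line_of_vcomb:
  assumes t: "vdet t l m \<noteq> 0" and ab: "a \<noteq> 0 \<or> b \<noteq> 0"
  shows "meet (line_of t) (line_of (vcomb a l b m)) = point_of (vcomb a (vcross t l) b (vcross t m))"
proof -
  have "vcross (vcross t l) (vcross t m) \<noteq> vzero"
    using t by (auto simp: vcross_vcross_vcross vscale_eq_vzero_iff)
  then show ?thesis
    using meet_line_of[of t "vcomb a l b m"] ab by (simp add: vcross_vcomb_right vcomb_eq_vzero_iff)
qed

lemma harmonic_pencil_line_of_vcomb_iff:
  assumes two: "(2::'a::field) \<noteq> 0" and lm: "vcross l m \<noteq> (vzero::'a vec3)"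
    and ab3: "a3 \<noteq> 0 \<or> b3 \<noteq> 0" and ab4: "a4 \<noteq> 0 \<or> b4 \<noteq> 0"
  shows "harmonic_pencil (line_of l) (line_of (vcomb a3 l b3 m)) (line_of m) (line_of (vcomb a4 l b4 m))
    \<longleftrightarrow> a3 \<noteq> 0 \<and> b3 \<noteq> 0 \<and> a3 * b4 + b3 * a4 = 0"
proof -
  let ?L = "\<lambda>s t. line_of (vcomb s l t m)"
  have lm_L: "line_of l = ?L 1 0" "line_of m = ?L 0 1" by simp_all
  note L_eq = line_of_vcomb_eq_iff[OF lm]
  have meet_lm: "meet (?L 1 0) (?L 0 1) = point_of (vcross l m)" using meet_line_of[OF lm] by simp
  have transversal: "harmonic_set (meet (line_of t) (?L 1 0)) (meet (line_of t) (?L a3 b3))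
      (meet (line_of t) (?L 0 1)) (meet (line_of t) (?L a4 b4)) \<longleftrightarrow> a3 * b4 + b3 * a4 = 0"
    if t: "vdet t l m \<noteq> 0" and a3: "a3 \<noteq> 0" and b3: "b3 \<noteq> 0" for t
  proof -
    have tl_tm: "vcross (vcross t l) (vcross t m) \<noteq> vzero"
      using t by (auto simp: vcross_vcross_vcross vscale_eq_vzero_iff)
    note P = meet_transversal_line_of_vcomb[OF t]
    have "meet (line_of t) (line_of l) = point_of (vcross t l)"
      and "meet (line_of t) (line_of m) = point_of (vcross t m)"
      using P[of 1 0] P[of 0 1] by simp_all
    then show ?thesis
      using harmonic_set_point_of_vcomb_iff[OF two tl_tm a3 b3 ab4] by (simp add: P[OF ab3] P[OF ab4])
  qed
  have not_incid: "\<not> incid (point_of (vcross l m)) (line_of t) \<longleftrightarrow> vdet t l m \<noteq> 0" if "t \<noteq> vzero" for t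
    using incid_point_of_line_of[OF lm that] by (simp add: vdot_commute)
  show ?thesis
    unfolding lm_L
  proof
    assume h: "harmonic_pencil (?L 1 0) (?L a3 b3) (?L 0 1) (?L a4 b4)"
    then have "?L 1 0 \<noteq> ?L a3 b3" "?L a3 b3 \<noteq> ?L 0 1" by (simp_all add: harmonic_pencil_def)
    then have a3: "a3 \<noteq> 0" and b3: "b3 \<noteq> 0" using L_eq[of 1 0 a3 b3] L_eq[of a3 b3 0 1] ab3 by auto
    obtain T where "\<not> incid (point_of (vcross l m)) T"
      and hs: "harmonic_set (meet T (?L 1 0)) (meet T (?L a3 b3)) (meet T (?L 0 1)) (meet T (?L a4 b4))"
      using h unfolding harmonic_pencil_def meet_lm by blast
    moreover obtain t where "t \<noteq> vzero" "T = line_of t" using ex_line_of by blast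
    ultimately show "a3 \<noteq> 0 \<and> b3 \<noteq> 0 \<and> a3 * b4 + b3 * a4 = 0"
      using transversal a3 b3 not_incid by blast
  next
    assume "a3 \<noteq> 0 \<and> b3 \<noteq> 0 \<and> a3 * b4 + b3 * a4 = 0"
    then have a3: "a3 \<noteq> 0" and b3: "b3 \<noteq> 0" and e: "a3 * b4 + b3 * a4 = 0" by simp_all
    then have a4: "a4 \<noteq> 0" and b4: "b4 \<noteq> 0" using ab4 by auto
    have "a3 * b4 - b3 * a4 = 2 * (a3 * b4)" using e by algebra
    also have "\<dots> \<noteq> 0" using two a3 b4 by simp
    finally have "distinct [?L 1 0, ?L a3 b3, ?L 0 1, ?L a4 b4]"
      using a3 b3 a4 b4 L_eq[of 1 0 a3 b3] L_eq[of 1 0 0 1] L_eq[of 1 0 a4 b4] L_eq[of a3 b3 0 1]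
        L_eq[of a3 b3 a4 b4] L_eq[of 0 1 a4 b4]
      by (simp del: vcomb_1_0 vcomb_0_1)
    moreover have "concurrent4 (?L 1 0) (?L a3 b3) (?L 0 1) (?L a4 b4)"
      unfolding concurrent4_def using ab3 ab4 incid_line_of_vcomb[OF lm]
      by (intro exI[of _ "point_of (vcross l m)"]) (simp del: vcomb_1_0 vcomb_0_1)
    moreover obtain t where "vdet t l m \<noteq> 0" using ex_vdot_nonzero[OF lm] by blast
    ultimately show "harmonic_pencil (?L 1 0) (?L a3 b3) (?L 0 1) (?L a4 b4)"
      unfolding harmonic_pencil_def meet_lm using transversal[OF _ a3 b3] e not_incid
      by (metis vdot_vzero(1))
  qed
qed

lemma harm_conj_line_line_of_vcomb:
  assumes two: "(2::'a::field) \<noteq> 0" and lm: "vcross l m \<noteq> (vzero::'a vec3)"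
    and a: "a \<noteq> 0" and b: "b \<noteq> 0"
  shows "harm_conj_line (line_of l) (line_of m) (line_of (vcomb a l b m)) = line_of (vcomb a l (- b) m)"
  unfolding harm_conj_line_def
proof (rule the_equality)
  show "harmonic_pencil (line_of l) (line_of (vcomb a l b m)) (line_of m) (line_of (vcomb a l (- b) m))"
    using harmonic_pencil_line_of_vcomb_iff[OF two lm] a b by simp
next
  fix L assume h: "harmonic_pencil (line_of l) (line_of (vcomb a l b m)) (line_of m) L"
  then obtain P where "incid P (line_of l)" "incid P (line_of m)" "incid P L"
    unfolding harmonic_pencil_def concurrent4_def by blast
  then have "incid (point_of (vcross l m)) L" using point_of_eq_if_incid[OF _ _ lm] by blast
  then obtain g k where gk: "g \<noteq> 0 \<or> k \<noteq> 0" and L: "L = line_of (vcomb g l k m)"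
    using ex_vcomb_line_through_point[OF _ lm] by blast
  then have "a * k + b * g = 0" using h harmonic_pencil_line_of_vcomb_iff[OF two lm _ gk] a by simp
  then have "g * - b - k * a = 0" by algebra
  then show "L = line_of (vcomb a l (- b) m)" using L gk a by (simp add: line_of_vcomb_eq_iff[OF lm])
qed

section \<open>Projective coordinate frames\<close>

text \<open>Line coordinates transform by the adjugate of the point transformation, which
  preserves incidence up to the factor vdet a b c.\<close>

definition vframe_dual :: "'a::field vec3 \<Rightarrow> 'a vec3 \<Rightarrow> 'a vec3 \<Rightarrow> 'a vec3 \<Rightarrow> 'a vec3" where
  "vframe_dual a b c = vframe (vcross b c) (vcross c a) (vcross a b)"

lemma vdot_vframe_vframe_dual: "vdot (vframe a b c u) (vframe_dual a b c w) = vdet a b c * vdot u w"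
  by (cases a, cases b, cases c, cases u, cases w)
    (simp add: vframe_dual_def vec3_simps algebra_simps)

lemma vcross_vframe: "vcross (vframe a b c u) (vframe a b c v) = vframe_dual a b c (vcross u v)"
  by (cases a, cases b, cases c, cases u, cases v)
    (simp add: vframe_dual_def vec3_simps algebra_simps)

lemma vcross_vframe_dual:
  "vcross (vframe_dual a b c u) (vframe_dual a b c v) = vscale (vdet a b c) (vframe a b c (vcross u v))"
  by (cases a, cases b, cases c, cases u, cases v)
    (simp add: vframe_dual_def vec3_simps algebra_simps)

lemma vframe_vcomb: "vframe a b c (vcomb s u t v) = vcomb s (vframe a b c u) t (vframe a b c v)"
  by (cases a, cases b, cases c, cases u, cases v) (simp add: vec3_simps algebra_simps)

lemma vframe_dual_vcomb:
  "vframe_dual a b c (vcomb s u t v) = vcomb s (vframe_dual a b c u) t (vframe_dual a b c v)"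
  unfolding vframe_dual_def by (rule vframe_vcomb)

lemma vframe_vzero [simp]: "vframe a b c vzero = vzero"
  by (cases a, cases b, cases c) (simp add: vec3_simps)

lemma vframe_units:
  "vframe a b c (1, 0, 0) = a" "vframe a b c (0, 1, 0) = b" "vframe a b c (0, 0, 1) = c"
  by (cases a, cases b, cases c, simp add: vec3_simps)+

lemma vframe_vscale_111: "vframe (vscale x a) (vscale y b) (vscale z c) (1, 1, 1) = vframe a b c (x, y, z)"
  by (cases a, cases b, cases c) (simp add: vec3_simps)

lemma vdet_vscale: "vdet (vscale x a) (vscale y b) (vscale z c) = x * y * z * vdet a b c"
  by (cases a, cases b, cases c) (simp add: vec3_simps algebra_simps)

locale projective_frame =
  fixes fa fb fc :: "'a::field vec3"
  assumes vdet_frame: "vdet fa fb fc \<noteq> 0"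
begin

definition point :: "'a vec3 \<Rightarrow> 'a ppoint" where
  "point u = point_of (vframe fa fb fc u)"

definition line :: "'a vec3 \<Rightarrow> 'a pline" where
  "line u = line_of (vframe_dual fa fb fc u)"

lemma vframe_eq_vzero_iff [simp]: "vframe fa fb fc u = vzero \<longleftrightarrow> u = vzero"
  using ex_vdot_nonzero[of u] vdot_vframe_vframe_dual[of fa fb fc u] vdet_frame
  by (metis vdot_commute vdot_vzero(1) vframe_vzero mult_eq_0_iff)

lemma vframe_dual_eq_vzero_iff [simp]: "vframe_dual fa fb fc u = vzero \<longleftrightarrow> u = vzero"
  using ex_vdot_nonzero[of u] vdot_vframe_vframe_dual[of fa fb fc _ u] vdet_frame
  by (metis vdot_vzero(2) vframe_vzero vframe_dual_def mult_eq_0_iff)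

lemma ex_point: "\<exists>u. u \<noteq> vzero \<and> X = point u"
proof -
  obtain v where v: "v \<noteq> vzero" "X = point_of v" using ex_point_of by blast
  let ?u = "(vdet v fb fc, vdet v fc fa, vdet v fa fb)"
  have u: "vframe fa fb fc ?u = vscale (vdet fa fb fc) v" by (rule vframe_cramer)
  then have "?u \<noteq> vzero" using v vdet_frame by (metis vframe_eq_vzero_iff vscale_eq_vzero_iff)
  moreover have "X = point ?u" unfolding point_def u using v vdet_frame by (simp add: point_of_vscale)
  ultimately show ?thesis by blast
qed

lemma point_eq_iff: "u \<noteq> vzero \<Longrightarrow> v \<noteq> vzero \<Longrightarrow> point u = point v \<longleftrightarrow> vcross u v = vzero"
  unfolding point_def by (simp add: point_of_eq_iff vcross_vframe)

lemma line_eq_iff: "u \<noteq> vzero \<Longrightarrow> v \<noteq> vzero \<Longrightarrow> line u = line v \<longleftrightarrow> vcross u v = vzero"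
  unfolding line_def by (simp add: line_of_eq_iff vcross_vframe_dual vscale_eq_vzero_iff vdet_frame)

lemma point_vscale: "c \<noteq> 0 \<Longrightarrow> u \<noteq> vzero \<Longrightarrow> point (vscale c u) = point u"
  by (simp add: point_eq_iff vscale_eq_vzero_iff vcross_vscale_left)

lemma line_vscale: "c \<noteq> 0 \<Longrightarrow> u \<noteq> vzero \<Longrightarrow> line (vscale c u) = line u"
  by (simp add: line_eq_iff vscale_eq_vzero_iff vcross_vscale_left)

lemma incid_point_line: "u \<noteq> vzero \<Longrightarrow> v \<noteq> vzero \<Longrightarrow> incid (point u) (line v) \<longleftrightarrow> vdot u v = 0"
  unfolding point_def line_def by (simp add: incid_point_of_line_of vdot_vframe_vframe_dual vdet_frame)

lemma join_point: "vcross u v \<noteq> vzero \<Longrightarrow> join (point u) (point v) = line (vcross u v)"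
  unfolding point_def line_def by (simp add: join_point_of vcross_vframe)

lemma meet_line: "vcross u v \<noteq> vzero \<Longrightarrow> meet (line u) (line v) = point (vcross u v)"
  unfolding point_def line_def
  by (simp add: meet_line_of vcross_vframe_dual vscale_eq_vzero_iff vdet_frame point_of_vscale)

lemma harm_conj_point_vcomb:
  assumes "(2::'a) \<noteq> 0" and "vcross p q \<noteq> vzero" and "a \<noteq> 0" and "b \<noteq> 0"
  shows "harm_conj (point p) (point q) (point (vcomb a p b q)) = point (vcomb a p (- b) q)"
  using assms unfolding point_def vframe_vcomb
  by (simp add: harm_conj_point_of_vcomb vcross_vframe)

lemma harm_conj_line_line_vcomb:
  assumes "(2::'a) \<noteq> 0" and "vcross l m \<noteq> vzero" and "a \<noteq> 0" and "b \<noteq> 0"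
  shows "harm_conj_line (line l) (line m) (line (vcomb a l b m)) = line (vcomb a l (- b) m)"
  using assms unfolding line_def vframe_dual_vcomb
  by (simp add: harm_conj_line_line_of_vcomb vcross_vframe_dual vscale_eq_vzero_iff vdet_frame)

lemma harmonic_pencil_line_vcomb_iff:
  assumes "(2::'a) \<noteq> 0" and "vcross l m \<noteq> vzero"
    and "a3 \<noteq> 0 \<or> b3 \<noteq> 0" and "a4 \<noteq> 0 \<or> b4 \<noteq> 0"
  shows "harmonic_pencil (line l) (line (vcomb a3 l b3 m)) (line m) (line (vcomb a4 l b4 m))
    \<longleftrightarrow> a3 \<noteq> 0 \<and> b3 \<noteq> 0 \<and> a3 * b4 + b3 * a4 = 0"
  using assms unfolding line_def vframe_dual_vcomb
  by (simp add: harmonic_pencil_line_of_vcomb_iff vcross_vframe_dual vscale_eq_vzero_iff vdet_frame)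

end

section \<open>The quadrangle in standard position\<close>

lemma four_neq_zero: "(2::'a::field) \<noteq> 0 \<Longrightarrow> (4::'a) \<noteq> 0"
  using mult_eq_0_iff[of "2::'a" 2] by simp

definition on_conic :: "'a::field vec3 \<Rightarrow> bool" where
  "on_conic z = (case z of (z1, z2, z3) \<Rightarrow> 2 * z1 * z2 = z3 * (z1 + z2))"

definition conic_point :: "'a::field \<Rightarrow> 'a \<Rightarrow> 'a vec3" where
  "conic_point x y = (x * (x + y), y * (x + y), 2 * x * y)"

context projective_frame
begin

lemma tangent_at_first_vertex:
  assumes two: "(2::'a) \<noteq> 0"
  shows "tangent_at (point (1,0,0)) (point (0,0,1)) (point (0,1,0)) (point (1,1,1)) = line (0,-2,1)"
proof -
  have "join (point (1,0,0)) (point (0,0,1)) = line (0,-1,0)"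
    and "join (point (1,1,1)) (point (1,0,0)) = line (0,1,-1)"
    and "join (point (1,0,0)) (point (0,1,0)) = line (vcomb 1 (0,-1,0) 1 (0,1,-1))"
    using join_point[of "(1,0,0)" "(0,0,1)"] join_point[of "(1,1,1)" "(1,0,0)"]
      join_point[of "(1,0,0)" "(0,1,0)"] line_eq_iff[of "(0,0,1)" "(0,0,-1)"]
    by (simp_all add: vec3_simps)
  then show ?thesis
    using harm_conj_line_line_vcomb[OF two, of "(0,-1,0)" "(0,1,-1)" 1 1]
    by (simp add: tangent_at_def vec3_simps)
qed

lemma tangent_at_second_vertex:
  assumes two: "(2::'a) \<noteq> 0"
  shows "tangent_at (point (0,1,0)) (point (1,1,1)) (point (1,0,0)) (point (0,0,1)) = line (2,0,-1)"
proof -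
  have "join (point (0,1,0)) (point (1,1,1)) = line (1,0,-1)"
    and "join (point (0,0,1)) (point (0,1,0)) = line (-1,0,0)"
    and "join (point (0,1,0)) (point (1,0,0)) = line (vcomb 1 (1,0,-1) 1 (-1,0,0))"
    using join_point[of "(0,1,0)" "(1,1,1)"] join_point[of "(0,0,1)" "(0,1,0)"]
      join_point[of "(0,1,0)" "(1,0,0)"]
    by (simp_all add: vec3_simps)
  then show ?thesis
    using harm_conj_line_line_vcomb[OF two, of "(1,0,-1)" "(-1,0,0)" 1 1]
    by (simp add: tangent_at_def vec3_simps)
qed

lemma meet_tangents:
  assumes two: "(2::'a) \<noteq> 0"
  shows "line (0,-2,1) \<noteq> line (2,0,-1)" and "meet (line (0,-2,1)) (line (2,0,-1)) = point (1,1,2)"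
proof -
  have cross: "vcross (0,-2,1) (2,0,-1) = vscale 2 ((1,1,2) :: 'a vec3)" by (simp add: vec3_simps)
  then show "line (0,-2,1) \<noteq> line (2,0,-1)"
    using line_eq_iff[of "(0,-2,1)" "(2,0,-1)"] two by (simp add: vec3_simps)
  show "meet (line (0,-2,1)) (line (2,0,-1)) = point (1,1,2)"
    using meet_line[of "(0,-2,1)" "(2,0,-1)"] point_vscale[OF two, of "(1,1,2)"] cross two
    by (simp add: vscale_eq_vzero_iff) (simp add: vec3_simps)
qed

lemma rho_line_point_on_base_line:
  assumes two: "(2::'a) \<noteq> 0" and x: "x \<noteq> 0" and y: "y \<noteq> 0"
  shows "rho_line (point (1,0,0)) (point (0,1,0)) (point (x,y,0)) = point (x,-y,0)"
proof -
  have "point (x,y,0) \<noteq> point (1,0,0)" "point (x,y,0) \<noteq> point (0,1,0)"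
    using point_eq_iff[of "(x,y,0)" "(1,0,0)"] point_eq_iff[of "(x,y,0)" "(0,1,0)"] x y
    by (simp_all add: vec3_simps)
  moreover have "harm_conj (point (1,0,0)) (point (0,1,0)) (point (vcomb x (1,0,0) y (0,1,0)))
      = point (vcomb x (1,0,0) (-y) (0,1,0))"
    by (rule harm_conj_point_vcomb[OF two _ x y]) (simp add: vec3_simps)
  ultimately show ?thesis by (simp add: rho_line_def vec3_simps)
qed

lemma reflection_axis:
  assumes two: "(2::'a) \<noteq> 0" and x: "x \<noteq> 0"
  shows "join (point (x,-y,0)) (point (1,1,2)) = line (-2*y, -2*x, x+y)"
proof -
  have cross: "vcross (x,-y,0) (1,1,2) = (-2*y, -2*x, x+y)" by (simp add: vec3_simps algebra_simps)
  have "(-2*y, -2*x, x+y) \<noteq> vzero" using two x by (simp add: vec3_simps)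
  then show ?thesis using join_point[of "(x,-y,0)" "(1,1,2)"] unfolding cross by simp
qed

lemma not_incid_reflection_axis:
  assumes two: "(2::'a) \<noteq> 0" and x: "x \<noteq> 0" and y: "y \<noteq> 0"
  shows "\<not> incid (point (x,y,0)) (line (-2*y, -2*x, x+y))"
proof -
  have "vdot (x,y,0) (-2*y, -2*x, x+y) = - (2 * 2 * (x * y))" by (simp add: vec3_simps algebra_simps)
  then show ?thesis using incid_point_line[of "(x,y,0)" "(-2*y, -2*x, x+y)"] two four_neq_zero[OF two] x y
    by (simp add: vec3_simps)
qed

lemma rho_refl_third_vertex:
  assumes two: "(2::'a) \<noteq> 0" and x: "x \<noteq> 0" and y: "y \<noteq> 0"
  shows "rho_refl (point (x,y,0)) (line (-2*y, -2*x, x+y)) (point (0,0,1)) = point (conic_point x y)"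
proof -
  have "vdot (0,0,1) (-2*y, -2*x, x+y) = x + y" by (simp add: vec3_simps)
  then have incid_C: "incid (point (0,0,1)) (line (-2*y, -2*x, x+y)) \<longleftrightarrow> x + y = 0"
    using incid_point_line[of "(0,0,1)" "(-2*y, -2*x, x+y)"] two x by (simp add: vec3_simps)
  show ?thesis
  proof (cases "x + y = 0")
    case True
    then have "point (conic_point x y) = point (0,0,1)"
      using point_eq_iff[of "conic_point x y" "(0,0,1)"] two x y by (simp add: conic_point_def vec3_simps)
    then show ?thesis using incid_C True by (simp add: rho_refl_def)
  next
    case False
    define N :: "'a vec3" where "N = (x * (x + y), y * (x + y), 2 * 2 * x * y)"
    have "join (point (0,0,1)) (point (x,y,0)) = line (-y, x, 0)"
      using join_point[of "(0,0,1)" "(x,y,0)"] x by (simp add: vec3_simps)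
    moreover have "meet (line (-y, x, 0)) (line (-2*y, -2*x, x+y)) = point N"
      using meet_line[of "(-y, x, 0)" "(-2*y, -2*x, x+y)"] four_neq_zero[OF two] x y
      by (simp add: N_def vec3_simps algebra_simps)
    moreover have "point (0,0,1) = point (vcomb (- (x + y)) (x,y,0) 1 N)"
      using point_eq_iff[of "(0,0,1)" "vcomb (- (x + y)) (x,y,0) 1 N"] four_neq_zero[OF two] x y
      by (simp add: N_def vec3_simps algebra_simps)
    moreover have "harm_conj (point (x,y,0)) (point N) (point (vcomb (- (x + y)) (x,y,0) 1 N))
        = point (vcomb (- (x + y)) (x,y,0) (- 1) N)"
    proof (rule harm_conj_point_vcomb[OF two])
      show "vcross (x,y,0) N \<noteq> vzero"
        using four_neq_zero[OF two] x y by (simp add: N_def vec3_simps)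
    qed (use False in \<open>simp_all add: neg_eq_iff_add_eq_0\<close>)
    moreover have "vcomb (- (x + y)) (x,y,0) (- 1) N = vscale (-2) (conic_point x y)"
      by (simp add: N_def conic_point_def vec3_simps algebra_simps)
    moreover have "point (x,y,0) \<noteq> point (0,0,1)"
      using point_eq_iff[of "(x,y,0)" "(0,0,1)"] x by (simp add: vec3_simps)
    ultimately show ?thesis
      using incid_C False point_vscale[of "-2" "conic_point x y"] two x y
      by (simp add: rho_refl_def conic_point_def vec3_simps)
  qed
qed

lemma reflected_point_neq_pole:
  assumes two: "(2::'a) \<noteq> 0" and x: "x \<noteq> 0" shows "point (x,-y,0) \<noteq> point (1,1,2)"
  using point_eq_iff[of "(x,-y,0)" "(1,1,2)"] two x by (simp add: vec3_simps)

end

lemma on_conic_vscale: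
  assumes "on_conic z" shows "on_conic (vscale k z)"
proof -
  obtain z1 z2 z3 where z: "z = (z1, z2, z3)" by (cases z)
  then have "2 * z1 * z2 = z3 * (z1 + z2)" using assms by (simp add: on_conic_def)
  then have "k * k * (2 * z1 * z2) = k * k * (z3 * (z1 + z2))" by simp
  then show ?thesis by (simp add: z on_conic_def vec3_simps algebra_simps)
qed

lemma on_conic_conic_point: "on_conic (conic_point x y)"
  by (simp add: on_conic_def conic_point_def algebra_simps)

lemma on_conic_vertices:
  "on_conic (1,0,0)" "on_conic (0,1,0)" "on_conic (0,0,1)" "on_conic (1,1,1)"
  by (simp_all add: on_conic_def)

context projective_frame
begin

lemma on_conic_if_point_eq:
  assumes "z \<noteq> vzero" "w \<noteq> vzero" "point z = point w" "on_conic w"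
  shows "on_conic z"
  using assms point_eq_iff[of w z] vcross_eq_vzero_imp_vscale[of w z] on_conic_vscale by metis

lemma harmonic_pencil_at_point_iff_on_conic:
  assumes two: "(2::'a) \<noteq> 0" and z3: "z3 \<noteq> 0"
    and not_C: "point (z1, z2, z3) \<noteq> point (0,0,1)" and not_D: "point (z1, z2, z3) \<noteq> point (1,1,1)"
  defines "z \<equiv> (z1, z2, z3)"
  shows "harmonic_pencil (line (vcross z (1,0,0))) (line (vcross z (0,0,1)))
      (line (vcross z (0,1,0))) (line (vcross z (1,1,1))) \<longleftrightarrow> on_conic z"
proof -
  define l where "l = vcross z (1,0,0)"
  define m where "m = vcross z (0,1,0)"
  have lm: "vcross l m \<noteq> vzero" using z3 by (simp add: l_def m_def z_def vec3_simps)
  have zC: "vcross z (0,0,1) \<noteq> vzero" and zD: "vcross z (1,1,1) \<noteq> vzero"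
    using not_C not_D point_eq_iff[of z "(0,0,1)"] point_eq_iff[of z "(1,1,1)"] z3
    by (auto simp: z_def vec3_simps)
  have e3: "vcomb z1 l z2 m = vscale (- z3) (vcross z (0,0,1))"
    and e4: "vcomb (z3 - z1) l (z3 - z2) m = vscale z3 (vcross z (1,1,1))"
    by (simp_all add: l_def m_def z_def vec3_simps algebra_simps)
  have "vcomb z1 l z2 m \<noteq> vzero" "vcomb (z3 - z1) l (z3 - z2) m \<noteq> vzero"
    unfolding e3 e4 using zC zD z3 by (simp_all add: vscale_eq_vzero_iff)
  then have ab3: "z1 \<noteq> 0 \<or> z2 \<noteq> 0" and ab4: "z3 - z1 \<noteq> 0 \<or> z3 - z2 \<noteq> 0" by auto
  have "line (vcross z (0,0,1)) = line (vcomb z1 l z2 m)"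
    and "line (vcross z (1,1,1)) = line (vcomb (z3 - z1) l (z3 - z2) m)"
    unfolding e3 e4 using zC zD z3 by (simp_all add: line_vscale)
  then have "harmonic_pencil (line l) (line (vcross z (0,0,1))) (line m) (line (vcross z (1,1,1)))
      \<longleftrightarrow> z1 \<noteq> 0 \<and> z2 \<noteq> 0 \<and> z1 * (z3 - z2) + z2 * (z3 - z1) = 0"
    using harmonic_pencil_line_vcomb_iff[OF two lm ab3 ab4] by simp
  also have "\<dots> \<longleftrightarrow> 2 * z1 * z2 = z3 * (z1 + z2)"
  proof
    assume "2 * z1 * z2 = z3 * (z1 + z2)"
    moreover from this have "z1 \<noteq> 0" "z2 \<noteq> 0" using ab3 z3 by auto
    ultimately show "z1 \<noteq> 0 \<and> z2 \<noteq> 0 \<and> z1 * (z3 - z2) + z2 * (z3 - z1) = 0" by algebra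
  qed (auto simp: algebra_simps)
  finally show ?thesis by (simp add: l_def m_def z_def on_conic_def)
qed

lemma mem_harmonic_curve_iff_on_conic:
  assumes two: "(2::'a) \<noteq> 0" and z: "z \<noteq> vzero"
  shows "point z \<in> harmonic_curve (point (1,0,0)) (point (0,0,1)) (point (0,1,0)) (point (1,1,1))
    \<longleftrightarrow> on_conic z"
proof (cases "point z \<in> {point (1,0,0), point (0,0,1), point (0,1,0), point (1,1,1)}")
  case True
  moreover have "((1,0,0)::'a vec3) \<noteq> vzero" "((0,0,1)::'a vec3) \<noteq> vzero"
    "((0,1,0)::'a vec3) \<noteq> vzero" "((1,1,1)::'a vec3) \<noteq> vzero"
    by (simp_all add: vec3_simps)
  ultimately have "on_conic z"
    using on_conic_if_point_eq[OF z] on_conic_vertices by blast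
  with True show ?thesis unfolding harmonic_curve_def by blast
next
  case not_vertex: False
  obtain z1 z2 z3 where zz: "z = (z1, z2, z3)" by (cases z)
  have cross: "vcross z (1,0,0) \<noteq> vzero" "vcross z (0,0,1) \<noteq> vzero"
    "vcross z (0,1,0) \<noteq> vzero" "vcross z (1,1,1) \<noteq> vzero"
    using not_vertex z point_eq_iff[of z] by (auto simp: vec3_simps)
  have curve: "point z \<in> harmonic_curve (point (1,0,0)) (point (0,0,1)) (point (0,1,0)) (point (1,1,1))
    \<longleftrightarrow> harmonic_pencil (line (vcross z (1,0,0))) (line (vcross z (0,0,1)))
          (line (vcross z (0,1,0))) (line (vcross z (1,1,1)))"
    using not_vertex by (auto simp: harmonic_curve_def harmonic_pencil_def join_point[OF cross(1)]
        join_point[OF cross(2)] join_point[OF cross(3)] join_point[OF cross(4)])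
  show ?thesis
  proof (cases "z3 = 0")
    case True
    then have "line (vcross z (1,0,0)) = line (vcross z (0,1,0))"
      using line_eq_iff[OF cross(1) cross(3)] by (simp add: zz vec3_simps)
    then have "point z \<notin> harmonic_curve (point (1,0,0)) (point (0,0,1)) (point (0,1,0)) (point (1,1,1))"
      unfolding curve harmonic_pencil_def by simp
    moreover have "\<not> on_conic z"
    proof
      assume "on_conic z"
      then have "z1 = 0 \<or> z2 = 0" using True two by (simp add: zz on_conic_def)
      then show False using cross True by (auto simp: zz vec3_simps)
    qed
    ultimately show ?thesis by simp
  next
    case z3: False
    have "point z \<noteq> point (0,0,1)" "point z \<noteq> point (1,1,1)" using not_vertex by simp_all
    then show ?thesis
      unfolding curve using harmonic_pencil_at_point_iff_on_conic[OF two z3] by (simp add: zz)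
  qed
qed

lemma on_conic_iff_mem_conic_points:
  assumes two: "(2::'a) \<noteq> 0" and z: "z \<noteq> vzero"
  shows "on_conic z \<longleftrightarrow>
    point z \<in> {point (conic_point x y) | x y. x \<noteq> 0 \<and> y \<noteq> 0} \<union> {point (1,0,0), point (0,1,0)}"
proof
  obtain z1 z2 z3 where zz: "z = (z1, z2, z3)" by (cases z)
  assume "on_conic z"
  then have conic: "2 * z1 * z2 = z3 * (z1 + z2)" by (simp add: zz on_conic_def)
  consider "z1 = 0" "z2 = 0" | "z1 = 0" "z2 \<noteq> 0" | "z1 \<noteq> 0" "z2 = 0" | "z1 \<noteq> 0" "z2 \<noteq> 0" by blast
  then show "point z \<in> {point (conic_point x y) | x y. x \<noteq> 0 \<and> y \<noteq> 0} \<union> {point (1,0,0), point (0,1,0)}"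
  proof cases
    case 1
    then have "point z = point (conic_point 1 (-1))"
      using point_eq_iff[OF z, of "conic_point 1 (-1)"] two z by (simp add: zz conic_point_def vec3_simps)
    then show ?thesis by fastforce
  next
    case 2
    then have "point z = point (0,1,0)"
      using conic point_eq_iff[OF z, of "(0,1,0)"] by (simp add: zz vec3_simps)
    then show ?thesis by simp
  next
    case 3
    then have "point z = point (1,0,0)"
      using conic point_eq_iff[OF z, of "(1,0,0)"] by (simp add: zz vec3_simps)
    then show ?thesis by simp
  next
    case 4
    then have "conic_point z1 z2 \<noteq> vzero" using two by (simp add: conic_point_def vec3_simps)
    moreover have "vcross z (conic_point z1 z2) = vzero"
      using conic by (simp add: zz conic_point_def vec3_simps algebra_simps)
    ultimately have "point z = point (conic_point z1 z2)" using point_eq_iff[OF z] by simp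
    then show ?thesis using 4 by blast
  qed
next
  assume "point z \<in> {point (conic_point x y) | x y. x \<noteq> 0 \<and> y \<noteq> 0} \<union> {point (1,0,0), point (0,1,0)}"
  then consider x y where "x \<noteq> 0" "y \<noteq> 0" "point z = point (conic_point x y)"
    | "point z = point (1,0,0)" | "point z = point (0,1,0)"
    by blast
  then show "on_conic z"
  proof cases
    case 1
    then have "conic_point x y \<noteq> vzero" using two by (simp add: conic_point_def vec3_simps)
    then show ?thesis using on_conic_if_point_eq[OF z _ 1(3) on_conic_conic_point] by simp
  next
    case 2
    then show ?thesis using on_conic_if_point_eq[OF z _ 2 on_conic_vertices(1)] by (simp add: vec3_simps)
  next
    case 3
    then show ?thesis using on_conic_if_point_eq[OF z _ 3 on_conic_vertices(2)] by (simp add: vec3_simps)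
  qed
qed

lemma point_on_base_line_iff:
  "incid X (join (point (1,0,0)) (point (0,1,0))) \<and> X \<noteq> point (1,0,0) \<and> X \<noteq> point (0,1,0)
    \<longleftrightarrow> (\<exists>x y. x \<noteq> 0 \<and> y \<noteq> 0 \<and> X = point (x, y, 0))"
  (is "?on_base \<longleftrightarrow> _")
proof -
  have base: "join (point (1,0,0)) (point (0,1,0)) = line (0,0,1)"
    using join_point[of "(1,0,0)" "(0,1,0)"] by (simp add: vec3_simps)
  show ?thesis
  proof
    assume h: ?on_base
    obtain u where u: "u \<noteq> vzero" "X = point u" using ex_point by blast
    obtain x y z where uu: "u = (x, y, z)" by (cases u)
    have "z = 0" using h u incid_point_line[OF u(1), of "(0,0,1)"] by (simp add: base uu vec3_simps)
    moreover have "x \<noteq> 0" "y \<noteq> 0"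
      using h u point_eq_iff[OF u(1), of "(1,0,0)"] point_eq_iff[OF u(1), of "(0,1,0)"] \<open>z = 0\<close>
      by (auto simp: uu vec3_simps)
    ultimately show "\<exists>x y. x \<noteq> 0 \<and> y \<noteq> 0 \<and> X = point (x, y, 0)" using u uu by blast
  next
    assume "\<exists>x y. x \<noteq> 0 \<and> y \<noteq> 0 \<and> X = point (x, y, 0)"
    then obtain x y where "x \<noteq> 0" "y \<noteq> 0" "X = point (x, y, 0)" by blast
    then show ?on_base
      using incid_point_line[of "(x,y,0)" "(0,0,1)"] point_eq_iff[of "(x,y,0)" "(1,0,0)"]
        point_eq_iff[of "(x,y,0)" "(0,1,0)"]
      by (simp add: base vec3_simps)
  qed
qed

lemma quadrangle_in_standard_position:
  assumes two: "(2::'a) \<noteq> 0"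
  defines "A \<equiv> point (1,0,0)" and "B \<equiv> point (0,1,0)" and "C \<equiv> point (0,0,1)" and "D \<equiv> point (1,1,1)"
  defines "a \<equiv> tangent_at A C B D" and "b \<equiv> tangent_at B D A C"
  shows "a \<noteq> b \<and>
    (\<forall>X. incid X (join A B) \<and> X \<noteq> A \<and> X \<noteq> B \<longrightarrow>
        rho_line A B X \<noteq> meet a b \<and> \<not> incid X (join (rho_line A B X) (meet a b)))
    \<and> harmonic_curve A C B D =
        {rho_refl X (join (rho_line A B X) (meet a b)) C | X.
            incid X (join A B) \<and> X \<noteq> A \<and> X \<noteq> B} \<union> {A, B}"
proof -
  have "a = line (0,-2,1)" "b = line (2,0,-1)"
    unfolding a_def b_def A_def B_def C_def D_def
    using tangent_at_first_vertex[OF two] tangent_at_second_vertex[OF two] by simp_all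
  then have ab: "a \<noteq> b" and pole: "meet a b = point (1,1,2)" using meet_tangents[OF two] by simp_all
  note base = point_on_base_line_iff[folded A_def B_def]
  have reflection: "rho_line A B (point (x,y,0)) \<noteq> meet a b
      \<and> \<not> incid (point (x,y,0)) (join (rho_line A B (point (x,y,0))) (meet a b))
      \<and> rho_refl (point (x,y,0)) (join (rho_line A B (point (x,y,0))) (meet a b)) C = point (conic_point x y)"
    if "x \<noteq> 0" "y \<noteq> 0" for x y
    unfolding pole A_def B_def C_def rho_line_point_on_base_line[OF two that] reflection_axis[OF two that(1)]
    using reflected_point_neq_pole[OF two that(1)] not_incid_reflection_axis[OF two that]
      rho_refl_third_vertex[OF two that] by blast
  have images: "{rho_refl X (join (rho_line A B X) (meet a b)) C | X. incid X (join A B) \<and> X \<noteq> A \<and> X \<noteq> B}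
      = {point (conic_point x y) | x y. x \<noteq> 0 \<and> y \<noteq> 0}"
  proof (intro set_eqI iffI)
    fix Z assume "Z \<in> {rho_refl X (join (rho_line A B X) (meet a b)) C | X.
        incid X (join A B) \<and> X \<noteq> A \<and> X \<noteq> B}"
    then obtain X where "incid X (join A B) \<and> X \<noteq> A \<and> X \<noteq> B"
      and Z: "Z = rho_refl X (join (rho_line A B X) (meet a b)) C" by blast
    then obtain x y where xy: "x \<noteq> 0" "y \<noteq> 0" and "X = point (x,y,0)" unfolding base by blast
    then have "Z = point (conic_point x y)" using Z reflection[OF xy] by simp
    then show "Z \<in> {point (conic_point x y) | x y. x \<noteq> 0 \<and> y \<noteq> 0}" using xy by blast
  next
    fix Z assume "Z \<in> {point (conic_point x y) | x y. x \<noteq> 0 \<and> y \<noteq> 0}"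
    then obtain x y where xy: "x \<noteq> 0" "y \<noteq> 0" and Z: "Z = point (conic_point x y)" by blast
    have "incid (point (x,y,0)) (join A B) \<and> point (x,y,0) \<noteq> A \<and> point (x,y,0) \<noteq> B"
      unfolding base using xy by blast
    moreover have "Z = rho_refl (point (x,y,0)) (join (rho_line A B (point (x,y,0))) (meet a b)) C"
      using Z reflection[OF xy] by simp
    ultimately show "Z \<in> {rho_refl X (join (rho_line A B X) (meet a b)) C | X.
        incid X (join A B) \<and> X \<noteq> A \<and> X \<noteq> B}" by blast
  qed
  have curve: "harmonic_curve A C B D = {point (conic_point x y) | x y. x \<noteq> 0 \<and> y \<noteq> 0} \<union> {A, B}"
  proof (rule set_eqI)
    fix Z
    obtain z where "z \<noteq> vzero" "Z = point z" using ex_point by blast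
    then show "Z \<in> harmonic_curve A C B D \<longleftrightarrow> Z \<in> {point (conic_point x y) | x y. x \<noteq> 0 \<and> y \<noteq> 0} \<union> {A, B}"
      unfolding A_def B_def C_def D_def
      using mem_harmonic_curve_iff_on_conic[OF two] on_conic_iff_mem_conic_points[OF two] by simp
  qed
  have "rho_line A B X \<noteq> meet a b \<and> \<not> incid X (join (rho_line A B X) (meet a b))"
    if X: "incid X (join A B) \<and> X \<noteq> A \<and> X \<noteq> B" for X
  proof -
    obtain x y where xy: "x \<noteq> 0" "y \<noteq> 0" and "X = point (x,y,0)" using X unfolding base by blast
    then show ?thesis using reflection[OF xy] by simp
  qed
  then show ?thesis unfolding images curve using ab by blast
qed

end

section \<open>Reduction to the standard quadrangle\<close>

lemma ex_projective_frame:
  assumes "general_position A C B D"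
  shows "\<exists>fa fb fc. projective_frame fa fb fc \<and>
    A = projective_frame.point fa fb fc (1,0,0) \<and> B = projective_frame.point fa fb fc (0,1,0) \<and>
    C = projective_frame.point fa fb fc (0,0,1) \<and> D = projective_frame.point fa fb fc (1,1,1)"
proof -
  have distinct: "distinct [A, C, B, D]"
    and not_collinear: "\<And>P Q R. P \<in> {A, C, B, D} \<Longrightarrow> Q \<in> {A, C, B, D} \<Longrightarrow> R \<in> {A, C, B, D} \<Longrightarrow>
       distinct [P, Q, R] \<Longrightarrow> \<not> (\<exists>l. incid P l \<and> incid Q l \<and> incid R l)"
    using assms unfolding general_position_def by blast+
  obtain a0 b0 c0 d0 where reps: "a0 \<noteq> vzero" "b0 \<noteq> vzero" "c0 \<noteq> vzero" "d0 \<noteq> vzero"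
    and A: "A = point_of a0" and B: "B = point_of b0" and C: "C = point_of c0" and D: "D = point_of d0"
    using ex_point_of by metis
  have "vdet a0 b0 c0 \<noteq> 0" "vdet b0 c0 d0 \<noteq> 0" "vdet c0 a0 d0 \<noteq> 0" "vdet a0 b0 d0 \<noteq> 0"
    using not_collinear[of A B C] not_collinear[of B C D] not_collinear[of C A D] not_collinear[of A B D]
      distinct reps
    by (intro vdet_neq_0_if_not_collinear; auto simp: A B C D)+
  then have det: "vdet a0 b0 c0 \<noteq> 0"
    and coords: "vdet d0 b0 c0 \<noteq> 0" "vdet d0 c0 a0 \<noteq> 0" "vdet d0 a0 b0 \<noteq> 0"
    using vdet_rotate by metis+
  \<comment> \<open>By Cramer's rule these scalings make d0 a multiple of fa + fb + fc.\<close>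
  define fa where "fa = vscale (vdet d0 b0 c0) a0"
  define fb where "fb = vscale (vdet d0 c0 a0) b0"
  define fc where "fc = vscale (vdet d0 a0 b0) c0"
  have frame: "projective_frame fa fb fc"
    using det coords by unfold_locales (simp add: fa_def fb_def fc_def vdet_vscale)
  have "projective_frame.point fa fb fc (1,0,0) = A" "projective_frame.point fa fb fc (0,1,0) = B"
    "projective_frame.point fa fb fc (0,0,1) = C"
    unfolding projective_frame.point_def[OF frame] vframe_units
    using reps coords by (simp_all add: fa_def fb_def fc_def point_of_vscale A B C)
  moreover have "projective_frame.point fa fb fc (1,1,1) = D"
    unfolding projective_frame.point_def[OF frame]
    unfolding fa_def fb_def fc_def vframe_vscale_111 vframe_cramer
    using reps det by (simp add: point_of_vscale D)
  ultimately show ?thesis using frame by metis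
qed

theorem mainTheorem4:
  fixes A C B D :: "'a::field ppoint"
  assumes char2: "(2::'a) \<noteq> 0"
    and quad: "general_position A C B D"
  defines "a \<equiv> tangent_at A C B D"
    and "b \<equiv> tangent_at B D A C"
  shows "a \<noteq> b \<and>
    (\<forall>X. incid X (join A B) \<and> X \<noteq> A \<and> X \<noteq> B \<longrightarrow>
        rho_line A B X \<noteq> meet a b \<and> \<not> incid X (join (rho_line A B X) (meet a b)))
    \<and> harmonic_curve A C B D =
        {rho_refl X (join (rho_line A B X) (meet a b)) C | X.
            incid X (join A B) \<and> X \<noteq> A \<and> X \<noteq> B} \<union> {A, B}"
proof -
  obtain fa fb fc where frame: "projective_frame fa fb fc"
    and vertices: "A = projective_frame.point fa fb fc (1,0,0)" "B = projective_frame.point fa fb fc (0,1,0)"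
      "C = projective_frame.point fa fb fc (0,0,1)" "D = projective_frame.point fa fb fc (1,1,1)"
    using ex_projective_frame[OF quad] by blast
  interpret projective_frame fa fb fc by (rule frame)
  show ?thesis
    using quadrangle_in_standard_position[OF char2] unfolding a_def b_def vertices .
qed

end
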